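(* Let $s\in(\frac12,1)$ and let $\Omega\subset\mathbb R^N$ be a bounded open set. Let $u,w:\mathbb R^N\to\mathbb R$ be continuous functions such that $\Delta^s_\infty u\ge0$ and $\Delta^s_\infty w\le0$ at every point of $\Omega$ in the viscosity sense; $u$ and $w$ grow less than $|x|^{2s}$ at infinity (i.e. there are $\alpha<2s$ and $C>0$ with $|u(x)|,|w(x)|\le C(1+|x|)^\alpha$); and $u\le w$ in $\mathbb R^N\setminus\Omega$. Then $u\le w$ in $\Omega$.
   Context: $S^{N-1}$ unit sphere. A function $\phi$ is $C^{1,1}$ at $x_0$ ($\phi\in C^{1,1}(x_0)$) if there are $p\in\mathbb R^N$, $M,\eta_0>0$ with $|\phi(x_0+x)-\phi(x_0)-p\cdot x|\le M|x|^2$ for $|x|<\eta_0$; $\nabla\phi(x_0):=p$. Infinity fractional Laplacian of such $\phi$: if $\nabla\phi(x)\ne0$, $v=\nabla\phi(x)/|\nabla\phi(x)|$, $\Delta^s_\infty\phi(x)=\int_0^\infty\frac{\phi(x+\eta v)+\phi(x-\eta v)-2\phi(x)}{\eta^{1+2s}}d\eta$; if $\nabla\phi(x)=0$, $\Delta^s_\infty\phi(x)=\sup_{y\in S^{N-1}}\int_0^\infty\frac{\phi(x+\eta y)-\phi(x)}{\eta^{1+2s}}d\eta+\inf_{z\in S^{N-1}}\int_0^\infty\frac{\phi(x-\eta z)-\phi(x)}{\eta^{1+2s}}d\eta$. Viscosity sense: an upper [lower] semicontinuous $u$ satisfies $\Delta^s_\infty u(x_0)\ge0$ [$\le0$] if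 whenever $r>0$, $\phi\in C^{1,1}(x_0)\cap C(\overline{B_r(x_0)})$, $\phi(x_0)=u(x_0)$ and $\phi>u$ [$\phi<u$] on $B_r(x_0)\setminus\{x_0\}$, the function $\tilde u$ equal to $\phi$ on $B_r(x_0)$ and to $u$ elsewhere satisfies $\Delta^s_\infty\tilde u(x_0)\ge0$ [$\le0$]. *)

theory Defs
  imports "HOL-Analysis.Analysis"
begin

definition C11_with :: "(real^'n \<Rightarrow> real) \<Rightarrow> real^'n \<Rightarrow> real^'n \<Rightarrow> bool" where
  "C11_with \<phi> x0 p \<longleftrightarrow> (\<exists>M \<eta>0. M > 0 \<and> \<eta>0 > 0 \<and>
      (\<forall>x. norm x < \<eta>0 \<longrightarrow> \<bar>\<phi> (x0 + x) - \<phi> x0 - p \<bullet> x\<bar> \<le> M * (norm x)\<^sup>2))"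

definition C11_at :: "(real^'n \<Rightarrow> real) \<Rightarrow> real^'n \<Rightarrow> bool" where
  "C11_at \<phi> x0 \<longleftrightarrow> (\<exists>p. C11_with \<phi> x0 p)"

definition grad_at :: "(real^'n \<Rightarrow> real) \<Rightarrow> real^'n \<Rightarrow> real^'n" where
  "grad_at \<phi> x0 = (THE p. C11_with \<phi> x0 p)"

text \<open>Infinity fractional Laplacian; integrals over (0,infinity) are (improper) Henstock-Kurzweil integrals.\<close>
definition inf_frac_lap :: "real \<Rightarrow> (real^'n \<Rightarrow> real) \<Rightarrow> real^'n \<Rightarrow> real" where
  "inf_frac_lap s \<phi> x =
    (if grad_at \<phi> x \<noteq> 0 then
       (let v = grad_at \<phi> x /\<^sub>R norm (grad_at \<phi> x) in
        integral {0<..} (\<lambda>\<eta>. (\<phi> (x + \<eta> *\<^sub>R v) + \<phi> (x - \<eta> *\<^sub>R v) - 2 * \<phi> x) / \<eta> powr (1 + 2 * s)))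
     else
       (SUP y\<in>sphere 0 1. integral {0<..} (\<lambda>\<eta>. (\<phi> (x + \<eta> *\<^sub>R y) - \<phi> x) / \<eta> powr (1 + 2 * s)))
       + (INF z\<in>sphere 0 1. integral {0<..} (\<lambda>\<eta>. (\<phi> (x - \<eta> *\<^sub>R z) - \<phi> x) / \<eta> powr (1 + 2 * s))))"

definition visc_ge0 :: "real \<Rightarrow> (real^'n \<Rightarrow> real) \<Rightarrow> real^'n \<Rightarrow> bool" where
  "visc_ge0 s u x0 \<longleftrightarrow> (\<forall>r>0. \<forall>\<phi>. C11_at \<phi> x0 \<and> continuous_on (cball x0 r) \<phi> \<and> \<phi> x0 = u x0 \<and>
      (\<forall>x\<in>ball x0 r - {x0}. \<phi> x > u x) \<longrightarrow>
      inf_frac_lap s (\<lambda>x. if x \<in> ball x0 r then \<phi> x else u x) x0 \<ge> 0)"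

definition visc_le0 :: "real \<Rightarrow> (real^'n \<Rightarrow> real) \<Rightarrow> real^'n \<Rightarrow> bool" where
  "visc_le0 s u x0 \<longleftrightarrow> (\<forall>r>0. \<forall>\<phi>. C11_at \<phi> x0 \<and> continuous_on (cball x0 r) \<phi> \<and> \<phi> x0 = u x0 \<and>
      (\<forall>x\<in>ball x0 r - {x0}. \<phi> x < u x) \<longrightarrow>
      inf_frac_lap s (\<lambda>x. if x \<in> ball x0 r then \<phi> x else u x) x0 \<le> 0)"

end

theory Submission
  imports Defs
begin

(* Doubling of variables. If u x0 > w x0 for some x0 in Omega, maximize u p - w q - |p - q|^4 / eps
   over a large ball; for small eps the maximum sits at two close points x, y of Omega. The
   quartic penalty gives C^{1,1} functions touching u from above at x and w from below at y with
   the same gradient, so both infinity fractional Laplacians integrate along the same directions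
   and can be compared integrand by integrand: the difference is O(t^{1-2s}) near t = 0,
   nonpositive by maximality, below -(u x0 - w x0)/2 times the kernel once x + t e has left Omega
   (where w hardly changes between x + t e and y + t e), and the growth exponent alpha < 2s makes
   the tail negligible. So the Laplacian at x is strictly below the one at y, against the
   viscosity inequalities. *)

section \<open>The quartic penalty\<close>

text \<open>The increment of \<open>z \<mapsto> |z|\<^sup>4 / \<epsilon>\<close> at \<open>a\<close>; the extra \<open>|h|\<^sup>4\<close> makes the touching strict.\<close>

definition penalty :: "real \<Rightarrow> 'a::real_inner \<Rightarrow> 'a \<Rightarrow> real" where
  "penalty \<epsilon> a h = (norm (a + h)^4 - norm a^4) / \<epsilon> + norm h^4"

lemma penalty_0 [simp]: "penalty \<epsilon> a 0 = 0"
  by (simp add: penalty_def)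

lemma norm_add_power4:
  fixes a h :: "'a::real_inner"
  shows "norm (a + h)^4 = (norm a^2 + 2 * (a \<bullet> h) + norm h^2)^2"
proof -
  have "norm (a + h)^2 = norm a^2 + 2 * (a \<bullet> h) + norm h^2"
    by (simp add: power2_norm_eq_inner algebra_simps inner_commute)
  then show ?thesis
    by (metis numeral_Bit0 power_add power2_eq_square)
qed

lemma penalty_first_order:
  fixes a h :: "'a::real_inner"
  assumes \<epsilon>: "0 < \<epsilon>" and h: "norm h \<le> 1"
  shows "\<bar>penalty \<epsilon> a h - ((4 * norm a^2 / \<epsilon>) *\<^sub>R a) \<bullet> h\<bar>
           \<le> ((2 * norm a^2 + (2 * norm a + 1)^2) / \<epsilon> + 1) * norm h^2"
proof -
  define A P H where "A = norm a^2" and "P = a \<bullet> h" and "H = norm h"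
  have "norm (a + h)^4 = (A + 2 * P + H^2)^2" "norm a^4 = A^2"
    by (simp_all add: norm_add_power4 A_def P_def H_def flip: power_mult)
  then have eq: "penalty \<epsilon> a h - ((4 * norm a^2 / \<epsilon>) *\<^sub>R a) \<bullet> h
      = (2 * A * H^2 + (2 * P + H^2)^2) / \<epsilon> + H^4"
    using \<epsilon> by (simp add: penalty_def A_def P_def H_def field_simps power2_eq_square)
  have H: "0 \<le> H" "H \<le> 1"
    using h by (auto simp: H_def)
  have "\<bar>2 * P + H^2\<bar> \<le> 2 * \<bar>P\<bar> + H"
    using H by (smt (verit) power2_eq_square mult_left_le power2_le_imp_le zero_le_power2)
  also have "\<dots> \<le> (2 * norm a + 1) * H"
    using Cauchy_Schwarz_ineq2[of a h] by (simp add: P_def H_def algebra_simps)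
  finally have "(2 * P + H^2)^2 \<le> (2 * norm a + 1)^2 * H^2"
    by (metis abs_ge_zero power2_abs power_mono power_mult_distrib)
  then have "(2 * A * H^2 + (2 * P + H^2)^2) / \<epsilon> \<le> ((2 * A + (2 * norm a + 1)^2) / \<epsilon>) * H^2"
    using \<epsilon> by (simp add: divide_right_mono field_simps)
  moreover have "0 \<le> (2 * A * H^2 + (2 * P + H^2)^2) / \<epsilon>"
    using \<epsilon> by (simp add: A_def)
  moreover have "H^4 \<le> H^2"
    using H by (simp add: power_decreasing)
  ultimately show ?thesis
    unfolding eq by (simp add: A_def H_def algebra_simps)
qed

lemma penalty_second_difference:
  fixes a h :: "'a::real_inner"
  assumes \<epsilon>: "0 < \<epsilon>" and h: "norm h \<le> 1"
  shows "0 \<le> penalty \<epsilon> a h + penalty \<epsilon> a (- h)"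
    and "penalty \<epsilon> a h + penalty \<epsilon> a (- h) \<le> ((12 * norm a^2 + 2) / \<epsilon> + 2) * norm h^2"
proof -
  define A P H where "A = norm a^2" and "P = a \<bullet> h" and "H = norm h"
  have expand_minus: "norm (a + - h)^4 = (A - 2 * P + H^2)^2"
    using norm_add_power4[of a "- h"] by (simp add: A_def P_def H_def)
  have expand_plus: "norm (a + h)^4 = (A + 2 * P + H^2)^2" "norm a^4 = A^2"
    by (simp_all add: norm_add_power4 A_def P_def H_def flip: power_mult)
  have eq: "penalty \<epsilon> a h + penalty \<epsilon> a (- h) = (4 * A * H^2 + 2 * H^4 + 8 * P^2) / \<epsilon> + 2 * H^4"
    unfolding penalty_def expand_minus expand_plus using \<epsilon>
    by (simp add: H_def field_simps power2_eq_square eval_nat_numeral)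
  have P: "P^2 \<le> A * H^2"
    unfolding P_def H_def A_def
    by (metis Cauchy_Schwarz_ineq2 power2_abs power_mono abs_ge_zero power_mult_distrib)
  have H: "0 \<le> H" "H^4 \<le> H^2"
    using h by (auto simp: H_def power_decreasing)
  show "0 \<le> penalty \<epsilon> a h + penalty \<epsilon> a (- h)"
    unfolding eq using \<epsilon> by (simp add: A_def)
  have "4 * A * H^2 + 2 * H^4 + 8 * P^2 \<le> (12 * A + 2) * H^2"
    using P H by (simp add: algebra_simps)
  then have "(4 * A * H^2 + 2 * H^4 + 8 * P^2) / \<epsilon> \<le> ((12 * A + 2) / \<epsilon>) * H^2"
    using \<epsilon> by (simp add: divide_right_mono)
  then show "penalty \<epsilon> a h + penalty \<epsilon> a (- h) \<le> ((12 * norm a^2 + 2) / \<epsilon> + 2) * norm h^2"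
    unfolding eq using H by (simp add: A_def H_def algebra_simps)
qed

section \<open>Gradients of \<open>C\<^sup>1\<^sup>,\<^sup>1\<close> functions\<close>

lemma C11_with_unique:
  assumes "C11_with f x p" "C11_with f x q"
  shows "p = q"
proof (rule ccontr)
  assume "p \<noteq> q"
  then have d: "0 < norm (p - q)"
    by simp
  obtain M1 e1 where M1: "0 < M1" "0 < e1"
    and f1: "\<And>h. norm h < e1 \<Longrightarrow> \<bar>f (x + h) - f x - p \<bullet> h\<bar> \<le> M1 * (norm h)\<^sup>2"
    using assms(1) unfolding C11_with_def by blast
  obtain M2 e2 where M2: "0 < M2" "0 < e2"
    and f2: "\<And>h. norm h < e2 \<Longrightarrow> \<bar>f (x + h) - f x - q \<bullet> h\<bar> \<le> M2 * (norm h)\<^sup>2"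
    using assms(2) unfolding C11_with_def by blast
  \<comment> \<open>Along \<open>h = t (p - q)\<close> the two expansions differ by \<open>t |p - q|\<^sup>2\<close>, which is not \<open>O(t\<^sup>2)\<close>.\<close>
  define t where "t = min (min e1 e2 / (2 * norm (p - q))) (1 / (2 * (M1 + M2)))"
  have t: "0 < t" "(M1 + M2) * t \<le> 1/2"
    using M1 M2 d by (auto simp: t_def min_def field_simps)
  have "norm (t *\<^sub>R (p - q)) = t * norm (p - q)"
    using t by simp
  also have "\<dots> \<le> min e1 e2 / (2 * norm (p - q)) * norm (p - q)"
    using d by (intro mult_right_mono) (auto simp: t_def)
  also have "\<dots> = min e1 e2 / 2"
    using d by simp
  finally have "norm (t *\<^sub>R (p - q)) \<le> min e1 e2 / 2" .
  then have h: "norm (t *\<^sub>R (p - q)) < e1" "norm (t *\<^sub>R (p - q)) < e2"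
    using M1 M2 by auto
  have "\<bar>(p - q) \<bullet> (t *\<^sub>R (p - q))\<bar> \<le> (M1 + M2) * (norm (t *\<^sub>R (p - q)))\<^sup>2"
    using f1[OF h(1)] f2[OF h(2)] by (simp add: inner_diff_left algebra_simps abs_if split: if_splits)
  then have "t * norm (p - q)^2 \<le> (M1 + M2) * (t^2 * norm (p - q)^2)"
    using t by (simp add: power2_norm_eq_inner power_mult_distrib abs_mult)
  then have "t * norm (p - q)^2 * 1 \<le> t * norm (p - q)^2 * ((M1 + M2) * t)"
    by (simp add: power2_eq_square algebra_simps)
  then have "1 \<le> (M1 + M2) * t"
    using t d by (simp add: mult_le_cancel_left_pos)
  then show False
    using t by linarith
qed

lemma grad_at_eqI: "C11_with f x p \<Longrightarrow> grad_at f x = p"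
  unfolding grad_at_def using C11_with_unique by blast

lemma C11_with_patch:
  assumes "C11_with \<phi> x p" "0 < r"
  shows "C11_with (\<lambda>z. if z \<in> ball x r then \<phi> z else u z) x p"
proof -
  obtain M e where "0 < M" "0 < e"
    and "\<And>h. norm h < e \<Longrightarrow> \<bar>\<phi> (x + h) - \<phi> x - p \<bullet> h\<bar> \<le> M * (norm h)\<^sup>2"
    using assms(1) unfolding C11_with_def by blast
  then show ?thesis
    unfolding C11_with_def using assms(2)
    by (intro exI[of _ M] exI[of _ "min e r"]) (auto simp: dist_norm)
qed

lemma C11_with_penalty_above:
  fixes x a :: "real^'n"
  assumes "0 < \<epsilon>"
  shows "C11_with (\<lambda>z. c + penalty \<epsilon> a (z - x)) x ((4 * norm a^2 / \<epsilon>) *\<^sub>R a)"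
  unfolding C11_with_def
proof (rule exI[of _ "(2 * norm a^2 + (2 * norm a + 1)^2) / \<epsilon> + 1"], rule exI[of _ 1], intro conjI allI impI)
  show "0 < (2 * norm a^2 + (2 * norm a + 1)^2) / \<epsilon> + 1"
    using assms by (auto intro: add_nonneg_pos)
  fix h :: "real^'n"
  assume "norm h < 1"
  then show "\<bar>(c + penalty \<epsilon> a (x + h - x)) - (c + penalty \<epsilon> a (x - x)) - ((4 * norm a^2 / \<epsilon>) *\<^sub>R a) \<bullet> h\<bar>
      \<le> ((2 * norm a^2 + (2 * norm a + 1)^2) / \<epsilon> + 1) * (norm h)\<^sup>2"
    using penalty_first_order[OF assms, of h a] by simp
qed simp

lemma C11_with_penalty_below:
  fixes y a :: "real^'n"
  assumes "0 < \<epsilon>"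
  shows "C11_with (\<lambda>z. c - penalty \<epsilon> a (y - z)) y ((4 * norm a^2 / \<epsilon>) *\<^sub>R a)"
  unfolding C11_with_def
proof (rule exI[of _ "(2 * norm a^2 + (2 * norm a + 1)^2) / \<epsilon> + 1"], rule exI[of _ 1], intro conjI allI impI)
  show "0 < (2 * norm a^2 + (2 * norm a + 1)^2) / \<epsilon> + 1"
    using assms by (auto intro: add_nonneg_pos)
  fix h :: "real^'n"
  assume "norm h < 1"
  then show "\<bar>(c - penalty \<epsilon> a (y - (y + h))) - (c - penalty \<epsilon> a (y - y)) - ((4 * norm a^2 / \<epsilon>) *\<^sub>R a) \<bullet> h\<bar>
      \<le> ((2 * norm a^2 + (2 * norm a + 1)^2) / \<epsilon> + 1) * (norm h)\<^sup>2"
    using penalty_first_order[OF assms, of "- h" a] by (simp add: abs_minus_commute)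
qed simp

section \<open>Convergence and comparison of the nonlocal integrals\<close>

lemma has_integral_powr_near_0:
  fixes s r c :: real
  assumes "s < 1" "0 < r"
  shows "((\<lambda>t. c * t powr (1 - 2 * s)) has_integral c * (r powr (2 - 2 * s) / (2 - 2 * s))) {0<..<r}"
proof -
  have "((\<lambda>t. c * t powr (1 - 2 * s)) has_integral c * (r powr (2 - 2 * s) / (2 - 2 * s))) {0..r}"
    using has_integral_powr_from_0[of "1 - 2 * s" r] assms by (intro has_integral_mult_right) auto
  then show ?thesis
    using has_integral_open_interval[of "\<lambda>t. c * t powr (1 - 2 * s)" _ 0 r] by simp
qed

lemma has_integral_powr_tail:
  fixes \<alpha> s r c :: real
  assumes "\<alpha> < 2 * s" "0 < r"
  shows "((\<lambda>t. c * t powr (\<alpha> - 1 - 2 * s)) has_integral c * (r powr (\<alpha> - 2 * s) / (2 * s - \<alpha>))) {r..}"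
  using has_integral_mult_right[OF has_integral_powr_to_inf[of "\<alpha> - 1 - 2 * s" r], of c] assms
  by (simp add: minus_divide_right)

lemma powr_div_kernel:
  fixes t a s c :: real
  assumes "0 < t"
  shows "c * t powr a / t powr (1 + 2 * s) = c * t powr (a - 1 - 2 * s)"
proof -
  have "t powr a = t powr (a - 1 - 2 * s) * t powr (1 + 2 * s)"
    by (simp flip: powr_add)
  then show ?thesis
    using assms by simp
qed

lemma kernel_integrable_dominated:
  fixes N :: "real \<Rightarrow> real"
  assumes s: "s < 1" and \<alpha>: "0 \<le> \<alpha>" "\<alpha> < 2 * s" and r: "0 < r" and KL: "0 \<le> K" "0 \<le> L"
    and N: "N \<in> borel_measurable borel"
    and near: "\<And>t. 0 < t \<Longrightarrow> t < r \<Longrightarrow> \<bar>N t\<bar> \<le> K * t^2"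
    and far: "\<And>t. r \<le> t \<Longrightarrow> \<bar>N t\<bar> \<le> L * t powr \<alpha>"
  shows "(\<lambda>t. N t / t powr (1 + 2 * s)) integrable_on {0<..}"
    and "\<bar>integral {0<..} (\<lambda>t. N t / t powr (1 + 2 * s))\<bar>
           \<le> K * (r powr (2 - 2 * s) / (2 - 2 * s)) + L * (r powr (\<alpha> - 2 * s) / (2 * s - \<alpha>))"
proof -
  define g where "g t = (if t \<in> {0<..<r} then K * t powr (1 - 2 * s) else 0)
      + (if t \<in> {r..} then L * t powr (\<alpha> - 1 - 2 * s) else 0)" for t
  have g: "(g has_integral K * (r powr (2 - 2 * s) / (2 - 2 * s)) + L * (r powr (\<alpha> - 2 * s) / (2 * s - \<alpha>))) {0<..}"
    unfolding g_def using r
    by (intro has_integral_add has_integral_restrict[THEN iffD2] has_integral_powr_near_0 has_integral_powr_tail)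
      (use s \<alpha> r in auto)
  have bound: "\<bar>N t / t powr (1 + 2 * s)\<bar> \<le> g t" if t: "t \<in> {0<..}" for t
  proof (cases "t < r")
    case True
    then have "\<bar>N t / t powr (1 + 2 * s)\<bar> \<le> K * t powr 2 / t powr (1 + 2 * s)"
      using near[of t] t by (simp add: abs_divide divide_right_mono powr_numeral)
    also have "\<dots> = K * t powr (1 - 2 * s)"
      using powr_div_kernel[of t K 2 s] t by simp
    finally show ?thesis
      using True t by (simp add: g_def)
  next
    case False
    then have "\<bar>N t / t powr (1 + 2 * s)\<bar> \<le> L * t powr \<alpha> / t powr (1 + 2 * s)"
      using far[of t] t by (simp add: abs_divide divide_right_mono)
    also have "\<dots> = L * t powr (\<alpha> - 1 - 2 * s)"
      using powr_div_kernel[of t L \<alpha> s] t by simp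
    finally show ?thesis
      using False t by (simp add: g_def)
  qed
  have "(\<lambda>t. N t / t powr (1 + 2 * s)) \<in> borel_measurable (lebesgue_on {0<..})"
    using N by (intro measurable_restrict_space1 measurable_completion) simp
  then show int: "(\<lambda>t. N t / t powr (1 + 2 * s)) integrable_on {0<..}"
    by (rule measurable_bounded_by_integrable_imp_integrable_real[OF _ _ bound]) (use g in auto)
  have "norm (integral {0<..} (\<lambda>t. N t / t powr (1 + 2 * s))) \<le> integral {0<..} g"
    using int g bound by (intro integral_norm_bound_integral) auto
  then show "\<bar>integral {0<..} (\<lambda>t. N t / t powr (1 + 2 * s))\<bar>
      \<le> K * (r powr (2 - 2 * s) / (2 - 2 * s)) + L * (r powr (\<alpha> - 2 * s) / (2 * s - \<alpha>))"
    using g by (simp add: integral_unique)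
qed

lemma SUP_add_INF_le:
  fixes f g f' g' :: "'a \<Rightarrow> real"
  assumes S: "S \<noteq> {}" and bdd: "bdd_above (g ` S)" "bdd_below (f' ` S)"
    and le: "\<And>e. e \<in> S \<Longrightarrow> f e \<le> g e + c" "\<And>e. e \<in> S \<Longrightarrow> f' e \<le> g' e + c"
  shows "(SUP e\<in>S. f e) + (INF e\<in>S. f' e) \<le> (SUP e\<in>S. g e) + (INF e\<in>S. g' e) + 2 * c"
proof -
  have "(SUP e\<in>S. f e) \<le> (SUP e\<in>S. g e) + c"
  proof (rule cSUP_least[OF S])
    fix e
    assume "e \<in> S"
    then show "f e \<le> (SUP e\<in>S. g e) + c"
      using le(1) cSUP_upper[OF _ bdd(1)] by fastforce
  qed
  moreover have "(INF e\<in>S. f' e) - c \<le> (INF e\<in>S. g' e)"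
  proof (rule cINF_greatest[OF S])
    fix e
    assume "e \<in> S"
    then show "(INF e\<in>S. f' e) - c \<le> g' e"
      using le(2) cINF_lower[OF bdd(2)] by fastforce
  qed
  ultimately show ?thesis
    by linarith
qed

text \<open>Sufficient conditions for the integrals in \<open>inf_frac_lap s f x\<close> to converge when
  \<open>0 \<le> \<alpha> < 2 s < 2\<close>. The bound on first differences near \<open>x\<close> is only required when the
  gradient vanishes, since only then one-sided integrals occur.\<close>

definition frac_lap_admissible ::
    "real \<Rightarrow> real \<Rightarrow> real \<Rightarrow> real \<Rightarrow> (real^'n \<Rightarrow> real) \<Rightarrow> real^'n \<Rightarrow> bool" where
  "frac_lap_admissible \<alpha> r K L f x \<longleftrightarrow> f \<in> borel_measurable borel
     \<and> (\<forall>h. norm h < r \<longrightarrow> \<bar>f (x + h) + f (x - h) - 2 * f x\<bar> \<le> K * norm h^2)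
     \<and> (grad_at f x = 0 \<longrightarrow> (\<forall>h. norm h < r \<longrightarrow> \<bar>f (x + h) - f x\<bar> \<le> K * norm h^2))
     \<and> (\<forall>h. r \<le> norm h \<longrightarrow> \<bar>f (x + h) - f x\<bar> \<le> L * norm h powr \<alpha>)"

lemma frac_lap_admissibleD:
  assumes "frac_lap_admissible \<alpha> r K L f x"
  shows "f \<in> borel_measurable borel"
    and "norm h < r \<Longrightarrow> \<bar>f (x + h) + f (x - h) - 2 * f x\<bar> \<le> K * norm h^2"
    and "grad_at f x = 0 \<Longrightarrow> norm h < r \<Longrightarrow> \<bar>f (x + h) - f x\<bar> \<le> K * norm h^2"
    and "r \<le> norm h \<Longrightarrow> \<bar>f (x + h) - f x\<bar> \<le> L * norm h powr \<alpha>"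
  using assms unfolding frac_lap_admissible_def by blast+

lemma frac_lap_admissible_integrable_second_difference:
  assumes f: "frac_lap_admissible \<alpha> r K L f x"
    and s: "s < 1" and \<alpha>: "0 \<le> \<alpha>" "\<alpha> < 2 * s" and r: "0 < r" and KL: "0 \<le> K" "0 \<le> L"
    and e: "norm e = 1"
  shows "(\<lambda>t. (f (x + t *\<^sub>R e) + f (x - t *\<^sub>R e) - 2 * f x) / t powr (1 + 2 * s)) integrable_on {0<..}"
proof (rule kernel_integrable_dominated(1)[OF s \<alpha> r KL(1), of "2 * L"])
  have [measurable]: "f \<in> borel_measurable borel"
    using frac_lap_admissibleD(1)[OF f] .
  show "(\<lambda>t. f (x + t *\<^sub>R e) + f (x - t *\<^sub>R e) - 2 * f x) \<in> borel_measurable borel"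
    by measurable
  fix t :: real
  show "0 < t \<Longrightarrow> t < r \<Longrightarrow> \<bar>f (x + t *\<^sub>R e) + f (x - t *\<^sub>R e) - 2 * f x\<bar> \<le> K * t^2"
    using frac_lap_admissibleD(2)[OF f, of "t *\<^sub>R e"] e by simp
  assume "r \<le> t"
  then have "\<bar>f (x + t *\<^sub>R e) - f x\<bar> \<le> L * t powr \<alpha>" "\<bar>f (x + - (t *\<^sub>R e)) - f x\<bar> \<le> L * t powr \<alpha>"
    using frac_lap_admissibleD(4)[OF f, of "t *\<^sub>R e"] frac_lap_admissibleD(4)[OF f, of "- (t *\<^sub>R e)"] e r
    by simp_all
  then show "\<bar>f (x + t *\<^sub>R e) + f (x - t *\<^sub>R e) - 2 * f x\<bar> \<le> 2 * L * t powr \<alpha>"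
    by simp
qed (use KL in simp)

lemma frac_lap_admissible_integrable_increment:
  assumes f: "frac_lap_admissible \<alpha> r K L f x" and flat: "grad_at f x = 0"
    and s: "s < 1" and \<alpha>: "0 \<le> \<alpha>" "\<alpha> < 2 * s" and r: "0 < r" and KL: "0 \<le> K" "0 \<le> L"
    and e: "norm e = 1"
  shows "(\<lambda>t. (f (x + t *\<^sub>R e) - f x) / t powr (1 + 2 * s)) integrable_on {0<..}"
    and "\<bar>integral {0<..} (\<lambda>t. (f (x + t *\<^sub>R e) - f x) / t powr (1 + 2 * s))\<bar>
           \<le> K * (r powr (2 - 2 * s) / (2 - 2 * s)) + L * (r powr (\<alpha> - 2 * s) / (2 * s - \<alpha>))"
proof -
  have [measurable]: "f \<in> borel_measurable borel"
    using frac_lap_admissibleD(1)[OF f] .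
  have "(\<lambda>t. f (x + t *\<^sub>R e) - f x) \<in> borel_measurable borel"
    by measurable
  moreover have "\<bar>f (x + t *\<^sub>R e) - f x\<bar> \<le> K * t^2" if "0 < t" "t < r" for t
    using frac_lap_admissibleD(3)[OF f flat, of "t *\<^sub>R e"] e that by simp
  moreover have "\<bar>f (x + t *\<^sub>R e) - f x\<bar> \<le> L * t powr \<alpha>" if "r \<le> t" for t
    using frac_lap_admissibleD(4)[OF f, of "t *\<^sub>R e"] e r that by simp
  ultimately show "(\<lambda>t. (f (x + t *\<^sub>R e) - f x) / t powr (1 + 2 * s)) integrable_on {0<..}"
    and "\<bar>integral {0<..} (\<lambda>t. (f (x + t *\<^sub>R e) - f x) / t powr (1 + 2 * s))\<bar>
           \<le> K * (r powr (2 - 2 * s) / (2 - 2 * s)) + L * (r powr (\<alpha> - 2 * s) / (2 * s - \<alpha>))"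
    using kernel_integrable_dominated[OF s \<alpha> r KL] by blast+
qed

lemma inf_frac_lap_le_of_increment_bound_nonflat:
  fixes f g :: "real^'n \<Rightarrow> real" and B :: "real \<Rightarrow> real"
  assumes f: "frac_lap_admissible \<alpha> r K L f x" and g: "frac_lap_admissible \<alpha> r K L g y"
    and s: "s < 1" and \<alpha>: "0 \<le> \<alpha>" "\<alpha> < 2 * s" and r: "0 < r" and KL: "0 \<le> K" "0 \<le> L"
    and grad: "grad_at f x = grad_at g y"
    and incr: "\<And>e t. norm e = 1 \<Longrightarrow> 0 < t \<Longrightarrow>
      ((f (x + t *\<^sub>R e) - f x) - (g (y + t *\<^sub>R e) - g y)) / t powr (1 + 2 * s) \<le> B t"
    and B: "B integrable_on {0<..}"
    and nonflat: "grad_at f x \<noteq> 0"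
  shows "inf_frac_lap s f x \<le> inf_frac_lap s g y + 2 * integral {0<..} B"
proof -
  define v where "v = grad_at f x /\<^sub>R norm (grad_at f x)"
  have v: "norm v = 1" "norm (- v) = 1"
    using nonflat by (simp_all add: v_def)
  define F where "F t = (f (x + t *\<^sub>R v) + f (x - t *\<^sub>R v) - 2 * f x) / t powr (1 + 2 * s)" for t
  define G where "G t = (g (y + t *\<^sub>R v) + g (y - t *\<^sub>R v) - 2 * g y) / t powr (1 + 2 * s)" for t
  have lap: "inf_frac_lap s f x = integral {0<..} F" "inf_frac_lap s g y = integral {0<..} G"
    unfolding inf_frac_lap_def Let_def grad[symmetric] v_def[symmetric] using nonflat
    by (simp_all add: F_def[abs_def] G_def[abs_def])
  have int: "F integrable_on {0<..}" "G integrable_on {0<..}"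
    unfolding F_def G_def using s \<alpha> r KL v(1)
    by (auto intro: frac_lap_admissible_integrable_second_difference[OF f]
        frac_lap_admissible_integrable_second_difference[OF g])
  have "integral {0<..} F - integral {0<..} G = integral {0<..} (\<lambda>t. F t - G t)"
    using int by (simp add: integral_diff)
  also have "\<dots> \<le> integral {0<..} (\<lambda>t. 2 * B t)"
  proof (rule integral_le)
    fix t :: real
    assume "t \<in> {0<..}"
    then have "F t - G t = ((f (x + t *\<^sub>R v) - f x) - (g (y + t *\<^sub>R v) - g y)) / t powr (1 + 2 * s)
        + ((f (x + t *\<^sub>R - v) - f x) - (g (y + t *\<^sub>R - v) - g y)) / t powr (1 + 2 * s)"
      by (simp add: F_def G_def diff_divide_distrib[symmetric] add_divide_distrib[symmetric] algebra_simps)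
    also have "\<dots> \<le> 2 * B t"
      using incr[OF v(1)] incr[OF v(2)] \<open>t \<in> {0<..}\<close> by fastforce
    finally show "F t - G t \<le> 2 * B t" .
  qed (use int B in \<open>auto intro: integrable_diff\<close>)
  finally show ?thesis
    using lap B by simp
qed

lemma inf_frac_lap_le_of_increment_bound_flat:
  fixes f g :: "real^'n \<Rightarrow> real" and B :: "real \<Rightarrow> real"
  assumes f: "frac_lap_admissible \<alpha> r K L f x" and g: "frac_lap_admissible \<alpha> r K L g y"
    and s: "s < 1" and \<alpha>: "0 \<le> \<alpha>" "\<alpha> < 2 * s" and r: "0 < r" and KL: "0 \<le> K" "0 \<le> L"
    and grad: "grad_at f x = grad_at g y"
    and incr: "\<And>e t. norm e = 1 \<Longrightarrow> 0 < t \<Longrightarrow>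
      ((f (x + t *\<^sub>R e) - f x) - (g (y + t *\<^sub>R e) - g y)) / t powr (1 + 2 * s) \<le> B t"
    and B: "B integrable_on {0<..}"
    and flat: "grad_at f x = 0"
  shows "inf_frac_lap s f x \<le> inf_frac_lap s g y + 2 * integral {0<..} B"
proof -
  define I where "I h z e = integral {0<..} (\<lambda>t. (h (z + t *\<^sub>R e) - h z) / t powr (1 + 2 * s))"
    for h :: "real^'n \<Rightarrow> real" and z e
  have lap: "inf_frac_lap s f x = (SUP e\<in>sphere 0 1. I f x e) + (INF e\<in>sphere 0 1. I f x (- e))"
    "inf_frac_lap s g y = (SUP e\<in>sphere 0 1. I g y e) + (INF e\<in>sphere 0 1. I g y (- e))"
    using flat grad by (simp_all add: inf_frac_lap_def I_def)
  define D where "D = K * (r powr (2 - 2 * s) / (2 - 2 * s)) + L * (r powr (\<alpha> - 2 * s) / (2 * s - \<alpha>))"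
  note int_f = frac_lap_admissible_integrable_increment[OF f flat s \<alpha> r KL]
  note int_g = frac_lap_admissible_integrable_increment[OF g flat[unfolded grad] s \<alpha> r KL]
  have le: "I f x e \<le> I g y e + integral {0<..} B" if e: "norm e = 1" for e
  proof -
    have "I f x e - I g y e = integral {0<..} (\<lambda>t. (f (x + t *\<^sub>R e) - f x) / t powr (1 + 2 * s)
        - (g (y + t *\<^sub>R e) - g y) / t powr (1 + 2 * s))"
      unfolding I_def using int_f(1)[OF e] int_g(1)[OF e] by (simp add: integral_diff)
    also have "\<dots> \<le> integral {0<..} B"
      using integrable_diff[OF int_f(1)[OF e] int_g(1)[OF e]] B incr[OF e]
      by (intro integral_le) (auto simp: diff_divide_distrib)
    finally show ?thesis
      by simp
  qed
  have "sphere (0::real^'n) 1 \<noteq> {}"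
    using vector_choose_size[of 1] by fastforce
  moreover have "bdd_above ((I g y) ` sphere 0 1)"
    using int_g(2) by (auto intro!: bdd_aboveI[of _ D] simp: I_def D_def abs_le_iff)
  moreover have "- D \<le> I f x (- e)" if "norm e = 1" for e
    using int_f(2)[of "- e"] that by (simp add: I_def D_def abs_le_iff)
  then have "bdd_below ((\<lambda>e. I f x (- e)) ` sphere 0 1)"
    by (auto intro!: bdd_belowI[of _ "- D"])
  ultimately show ?thesis
    unfolding lap using le by (intro SUP_add_INF_le) auto
qed

lemma inf_frac_lap_le_of_increment_bound:
  fixes f g :: "real^'n \<Rightarrow> real" and B :: "real \<Rightarrow> real"
  assumes f: "frac_lap_admissible \<alpha> r K L f x" and g: "frac_lap_admissible \<alpha> r K L g y"
    and s: "s < 1" and \<alpha>: "0 \<le> \<alpha>" "\<alpha> < 2 * s" and r: "0 < r" and KL: "0 \<le> K" "0 \<le> L"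
    and grad: "grad_at f x = grad_at g y"
    and incr: "\<And>e t. norm e = 1 \<Longrightarrow> 0 < t \<Longrightarrow>
      ((f (x + t *\<^sub>R e) - f x) - (g (y + t *\<^sub>R e) - g y)) / t powr (1 + 2 * s) \<le> B t"
    and B: "B integrable_on {0<..}"
  shows "inf_frac_lap s f x \<le> inf_frac_lap s g y + 2 * integral {0<..} B"
  using inf_frac_lap_le_of_increment_bound_nonflat[OF assms] inf_frac_lap_le_of_increment_bound_flat[OF assms]
  by blast

section \<open>Doubling of variables\<close>

lemma penalized_maximum_exists:
  fixes u w :: "'a::euclidean_space \<Rightarrow> real"
  assumes cont: "continuous_on UNIV u" "continuous_on UNIV w"
    and K: "compact K" "K \<noteq> {}" and \<epsilon>: "0 < \<epsilon>"
  obtains x y where "x \<in> K" "y \<in> K"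
    "\<And>p q. p \<in> K \<Longrightarrow> q \<in> K \<Longrightarrow> u p - w q - norm (p - q)^4 / \<epsilon> \<le> u x - w y - norm (x - y)^4 / \<epsilon>"
proof -
  define \<Phi> where "\<Phi> z = u (fst z) - w (snd z) - norm (fst z - snd z)^4 / \<epsilon>" for z :: "'a \<times> 'a"
  have "continuous_on (K \<times> K) \<Phi>"
    unfolding \<Phi>_def using \<epsilon>
    by (intro continuous_intros continuous_on_compose2[OF cont(1)] continuous_on_compose2[OF cont(2)]) auto
  moreover have "K \<times> K \<noteq> {}"
    using K by auto
  ultimately obtain z where z: "z \<in> K \<times> K" "\<And>z'. z' \<in> K \<times> K \<Longrightarrow> \<Phi> z' \<le> \<Phi> z"
    using continuous_attains_sup[OF compact_Times[OF K(1) K(1)]] by blast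
  show ?thesis
  proof (rule that)
    show "fst z \<in> K" "snd z \<in> K"
      using z(1) by (auto simp: mem_Times_iff)
    show "u p - w q - norm (p - q)^4 / \<epsilon> \<le> u (fst z) - w (snd z) - norm (fst z - snd z)^4 / \<epsilon>"
      if "p \<in> K" "q \<in> K" for p q
      using z(2)[of "(p, q)"] that by (simp add: \<Phi>_def)
  qed
qed

lemma penalized_maximum:
  fixes u w :: "'a::euclidean_space \<Rightarrow> real"
  assumes cont: "continuous_on UNIV u" "continuous_on UNIV w"
    and K: "compact K" "\<Omega> \<subseteq> K"
    and outside: "\<And>z. z \<notin> \<Omega> \<Longrightarrow> u z \<le> w z"
    and x0: "x0 \<in> \<Omega>" "w x0 < u x0"
  obtains \<epsilon> x y where "0 < \<epsilon>" "x \<in> \<Omega>" "y \<in> \<Omega>"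
    "\<And>p q. p \<in> K \<Longrightarrow> q \<in> K \<Longrightarrow> u p - w q - norm (p - q)^4 / \<epsilon> \<le> u x - w y - norm (x - y)^4 / \<epsilon>"
    "\<And>p q. p \<in> K \<Longrightarrow> q \<in> K \<Longrightarrow> p - q = x - y \<Longrightarrow> \<bar>w p - w q\<bar> < (u x0 - w x0) / 2"
proof -
  define M where "M = u x0 - w x0"
  have M: "0 < M"
    using x0 by (simp add: M_def)
  have "bounded ((\<lambda>p. \<bar>u p\<bar> + \<bar>w p\<bar>) ` K)"
    using K cont by (intro compact_imp_bounded compact_continuous_image continuous_intros)
      (auto intro: continuous_on_subset)
  then obtain B where B: "0 < B" "\<And>p. p \<in> K \<Longrightarrow> \<bar>u p\<bar> + \<bar>w p\<bar> \<le> B"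
    by (auto simp: bounded_pos)
  obtain \<delta>u where \<delta>u: "0 < \<delta>u" "\<And>p q. p \<in> K \<Longrightarrow> q \<in> K \<Longrightarrow> dist q p < \<delta>u \<Longrightarrow> dist (u q) (u p) < M / 2"
    using compact_uniformly_continuous[OF continuous_on_subset[OF cont(1)] K(1)] M
    unfolding uniformly_continuous_on_def by (metis half_gt_zero subset_UNIV)
  obtain \<delta>w where \<delta>w: "0 < \<delta>w" "\<And>p q. p \<in> K \<Longrightarrow> q \<in> K \<Longrightarrow> dist q p < \<delta>w \<Longrightarrow> dist (w q) (w p) < M / 2"
    using compact_uniformly_continuous[OF continuous_on_subset[OF cont(2)] K(1)] M
    unfolding uniformly_continuous_on_def by (metis half_gt_zero subset_UNIV)
  define \<delta> where "\<delta> = min \<delta>u \<delta>w"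
  have \<delta>: "0 < \<delta>"
    using \<delta>u \<delta>w by (simp add: \<delta>_def)
  \<comment> \<open>Since \<open>u x - w y \<le> 2 B\<close>, this choice forces \<open>|x - y| < \<delta>\<close> at the maximum.\<close>
  define \<epsilon> where "\<epsilon> = \<delta>^4 / (4 * B)"
  have \<epsilon>: "0 < \<epsilon>"
    using \<delta> B by (simp add: \<epsilon>_def)
  obtain x y where xy: "x \<in> K" "y \<in> K"
    and max: "\<And>p q. p \<in> K \<Longrightarrow> q \<in> K \<Longrightarrow> u p - w q - norm (p - q)^4 / \<epsilon> \<le> u x - w y - norm (x - y)^4 / \<epsilon>"
    using penalized_maximum_exists[OF cont K(1) _ \<epsilon>] K x0 by blast
  have gap_penalized: "M + norm (x - y)^4 / \<epsilon> \<le> u x - w y"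
    using max[of x0 x0] K x0 by (auto simp: M_def)
  have gap: "M \<le> u x - w y"
    using gap_penalized \<epsilon> by (smt (verit) divide_nonneg_pos zero_le_power norm_ge_zero)
  have "norm (x - y)^4 / \<epsilon> \<le> 2 * B"
    using gap_penalized B(2)[OF xy(1)] B(2)[OF xy(2)] M by linarith
  then have "norm (x - y)^4 \<le> \<delta>^4 / 2"
    using \<epsilon> B by (simp add: \<epsilon>_def field_simps)
  moreover have "0 < \<delta>^4"
    using \<delta> by simp
  ultimately have "norm (x - y)^4 < \<delta>^4"
    by linarith
  then have close: "norm (x - y) < \<delta>"
    using \<delta> by (simp add: power_less_imp_less_base)
  have osc: "\<bar>w p - w q\<bar> < M / 2" if "p \<in> K" "q \<in> K" "p - q = x - y" for p q
    using \<delta>w(2)[of q p] that close by (simp add: dist_norm \<delta>_def dist_real_def)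
  have "\<bar>u x - u y\<bar> < M / 2"
    using \<delta>u(2)[OF xy(2) xy(1)] close by (simp add: dist_norm \<delta>_def dist_real_def)
  then have y: "y \<in> \<Omega>"
    using outside[of y] gap M by (cases "y \<in> \<Omega>") (auto simp: abs_less_iff)
  have "\<bar>w x - w y\<bar> < M / 2"
    using osc xy by simp
  then have "x \<in> \<Omega>"
    using outside[of x] gap M by (cases "x \<in> \<Omega>") (auto simp: abs_less_iff)
  then show ?thesis
    using that y \<epsilon> max osc by (simp add: M_def)
qed

lemma penalty_touches_above:
  assumes max: "\<And>p. p \<in> S \<Longrightarrow> u p - norm (p - y)^4 / \<epsilon> \<le> u x - norm (x - y)^4 / \<epsilon>"
    and "z \<in> S" "z \<noteq> x"
  shows "u z < u x + penalty \<epsilon> (x - y) (z - x)"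
proof -
  have "penalty \<epsilon> (x - y) (z - x) = norm (z - y)^4 / \<epsilon> - norm (x - y)^4 / \<epsilon> + norm (z - x)^4"
    by (simp add: penalty_def diff_divide_distrib)
  moreover have "0 < norm (z - x)^4"
    using assms(3) by simp
  ultimately show ?thesis
    using max[OF assms(2)] by linarith
qed

lemma penalty_touches_below:
  assumes max: "\<And>q. q \<in> S \<Longrightarrow> - w q - norm (x - q)^4 / \<epsilon> \<le> - w y - norm (x - y)^4 / \<epsilon>"
    and "z \<in> S" "z \<noteq> y"
  shows "w y - penalty \<epsilon> (x - y) (y - z) < w z"
proof -
  have "penalty \<epsilon> (x - y) (y - z) = norm (x - z)^4 / \<epsilon> - norm (x - y)^4 / \<epsilon> + norm (y - z)^4"
    by (simp add: penalty_def diff_divide_distrib)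
  moreover have "0 < norm (y - z)^4"
    using assms(3) by simp
  ultimately show ?thesis
    using max[OF assms(2)] by linarith
qed

lemma increment_growth:
  fixes f :: "'a::real_normed_vector \<Rightarrow> real"
  assumes growth: "\<And>q. \<bar>f q\<bar> \<le> C * (1 + norm q) powr \<alpha>"
    and \<alpha>: "0 \<le> \<alpha>" and C: "0 \<le> C" and z: "norm z \<le> R" and \<tau>: "0 < \<tau>" "\<tau> \<le> norm h"
  shows "\<bar>f (z + h) - f z\<bar> \<le> 2 * C * ((1 + R) / \<tau> + 1) powr \<alpha> * norm h powr \<alpha>"
proof -
  have R: "0 \<le> R"
    using z norm_ge_zero[of z] by linarith
  have "(1 + R) * 1 \<le> (1 + R) * (norm h / \<tau>)"
    using R \<tau> by (intro mult_left_mono) auto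
  then have le: "1 + R + norm h \<le> ((1 + R) / \<tau> + 1) * norm h"
    using \<tau> by (simp add: field_simps)
  have "C * (1 + norm q) powr \<alpha> \<le> C * ((1 + R) / \<tau> + 1) powr \<alpha> * norm h powr \<alpha>"
    if "norm q \<le> R + norm h" for q
  proof -
    have "(1 + norm q) powr \<alpha> \<le> (((1 + R) / \<tau> + 1) * norm h) powr \<alpha>"
      using that le \<alpha> by (intro powr_mono2) auto
    also have "\<dots> = ((1 + R) / \<tau> + 1) powr \<alpha> * norm h powr \<alpha>"
      using R \<tau> by (simp add: powr_mult)
    finally show ?thesis
      using C by (simp add: mult.assoc mult_left_mono)
  qed
  moreover have "norm (z + h) \<le> R + norm h" "norm z \<le> R + norm h"
    using z norm_triangle_ineq[of z h] norm_ge_zero[of h] by linarith+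
  ultimately have "\<bar>f (z + h)\<bar> \<le> C * ((1 + R) / \<tau> + 1) powr \<alpha> * norm h powr \<alpha>"
    "\<bar>f z\<bar> \<le> C * ((1 + R) / \<tau> + 1) powr \<alpha> * norm h powr \<alpha>"
    using growth[of "z + h"] growth[of z] by (meson order_trans)+
  then show ?thesis
    by linarith
qed

locale growth_comparison =
  fixes s :: real and \<Omega> :: "(real^'n) set" and u w :: "real^'n \<Rightarrow> real" and \<alpha> C R :: real
  assumes s: "s < 1" and \<alpha>: "0 \<le> \<alpha>" "\<alpha> < 2 * s" and C: "0 < C" and R: "0 < R"
    and cont: "continuous_on UNIV u" "continuous_on UNIV w"
    and growth: "\<And>q. \<bar>u q\<bar> \<le> C * (1 + norm q) powr \<alpha>" "\<And>q. \<bar>w q\<bar> \<le> C * (1 + norm q) powr \<alpha>"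
    and \<Omega>: "\<Omega> \<subseteq> ball 0 R"
    and outside: "\<And>z. z \<notin> \<Omega> \<Longrightarrow> u z \<le> w z"
begin

definition exit_radius :: real where
  "exit_radius = 2 * R + 1"

definition annulus_gain :: "real \<Rightarrow> real" where
  "annulus_gain M = M / 2 / (2 * exit_radius) powr (1 + 2 * s)"

definition tail_coeff :: real where
  "tail_coeff = 4 * C * 2 powr \<alpha>"

lemma exit_radius_ge_1: "1 \<le> exit_radius"
  using R by (simp add: exit_radius_def)

lemma annulus_gain_le:
  assumes "0 < M" "0 < t" "t \<le> 2 * exit_radius"
  shows "- (M / 2) / t powr (1 + 2 * s) \<le> - annulus_gain M"
proof -
  have "t powr (1 + 2 * s) \<le> (2 * exit_radius) powr (1 + 2 * s)"
    using assms \<alpha> by (intro powr_mono2) auto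
  then have "M / 2 / (2 * exit_radius) powr (1 + 2 * s) \<le> M / 2 / t powr (1 + 2 * s)"
    using assms exit_radius_ge_1 by (intro divide_left_mono) auto
  then show ?thesis
    by (simp add: annulus_gain_def)
qed

lemma outside_of_exit_radius:
  assumes "x \<in> \<Omega>" "exit_radius \<le> norm h"
  shows "x + h \<notin> \<Omega>"
proof -
  have "norm h - norm x \<le> norm (x + h)"
    using norm_triangle_ineq2[of h "- x"] by (simp add: algebra_simps)
  then have "R \<le> norm (x + h)"
    using assms \<Omega> by (auto simp: exit_radius_def)
  then show ?thesis
    using \<Omega> by auto
qed

end

text \<open>A maximum point \<open>(x, y)\<close> of \<open>u p - w q - |p - q|\<^sup>4 / \<epsilon>\<close> on \<open>cball 0 (R + T)\<close>, with
  \<open>T\<close> chosen so large that the growth of \<open>u\<close> and \<open>w\<close> beyond distance \<open>T\<close> costs less than half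
  of what is gained on the annulus \<open>exit_radius \<le> |h| \<le> 2 exit_radius\<close>.\<close>

locale doubled_point = growth_comparison +
  fixes M T \<epsilon> :: real and x y :: "real^'n"
  assumes M: "0 < M"
    and T: "2 * exit_radius < T" "1 + R \<le> T"
    and tail: "tail_coeff * (T powr (\<alpha> - 2 * s) / (2 * s - \<alpha>)) < annulus_gain M * exit_radius / 2"
    and \<epsilon>: "0 < \<epsilon>" and xy: "x \<in> \<Omega>" "y \<in> \<Omega>"
    and max: "\<And>p q. p \<in> cball 0 (R + T) \<Longrightarrow> q \<in> cball 0 (R + T) \<Longrightarrow>
      u p - w q - norm (p - q)^4 / \<epsilon> \<le> u x - w y - norm (x - y)^4 / \<epsilon>"
    and gap: "M \<le> u x - w y"
    and osc: "\<And>p q. p \<in> cball 0 (R + T) \<Longrightarrow> q \<in> cball 0 (R + T) \<Longrightarrow> p - q = x - y \<Longrightarrow>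
      \<bar>w p - w q\<bar> < M / 2"
begin

definition u_touch :: "real \<Rightarrow> real^'n \<Rightarrow> real" where
  "u_touch r = (\<lambda>z. if z \<in> ball x r then u x + penalty \<epsilon> (x - y) (z - x) else u z)"

definition w_touch :: "real \<Rightarrow> real^'n \<Rightarrow> real" where
  "w_touch r = (\<lambda>z. if z \<in> ball y r then w y - penalty \<epsilon> (x - y) (y - z) else w z)"

definition curvature :: real where
  "curvature = (12 * norm (x - y)^2 + 2) / \<epsilon> + 2"

lemma norm_xy_less: "norm x < R" "norm y < R"
  using xy \<Omega> by auto

lemma in_working_ball:
  assumes "norm z \<le> R" "norm h \<le> T"
  shows "z + h \<in> cball 0 (R + T)"
  using assms norm_triangle_ineq[of z h] by auto

lemma xy_in_working_ball: "x \<in> cball 0 (R + T)" "y \<in> cball 0 (R + T)"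
  using norm_xy_less T R by auto

lemma max_in_x: "p \<in> cball 0 (R + T) \<Longrightarrow> u p - norm (p - y)^4 / \<epsilon> \<le> u x - norm (x - y)^4 / \<epsilon>"
  using max[of p y] xy_in_working_ball by simp

lemma max_in_y: "q \<in> cball 0 (R + T) \<Longrightarrow> - w q - norm (x - q)^4 / \<epsilon> \<le> - w y - norm (x - y)^4 / \<epsilon>"
  using max[of x q] xy_in_working_ball by simp

lemma ball_in_working_ball:
  assumes "z \<in> \<Omega>" "r \<le> 1"
  shows "ball z r \<subseteq> cball 0 (R + T)"
proof
  fix p
  assume "p \<in> ball z r"
  then have "norm (p - z) \<le> T"
    using assms T R by (auto simp: dist_norm norm_minus_commute)
  then show "p \<in> cball 0 (R + T)"
    using in_working_ball[of z "p - z"] assms \<Omega> by auto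
qed

lemma inf_frac_lap_u_touch_nonneg:
  assumes "visc_ge0 s u x" "0 < r" "r \<le> 1"
  shows "0 \<le> inf_frac_lap s (u_touch r) x"
proof -
  define \<phi> where "\<phi> z = u x + penalty \<epsilon> (x - y) (z - x)" for z
  have "continuous_on (cball x r) \<phi>"
    unfolding \<phi>_def penalty_def by (intro continuous_intros) (use \<epsilon> in auto)
  moreover have "\<phi> x = u x"
    by (simp add: \<phi>_def)
  moreover have "C11_at \<phi> x"
    using C11_with_penalty_above[OF \<epsilon>] by (auto simp: C11_at_def \<phi>_def[abs_def])
  moreover have "u z < \<phi> z" if "z \<in> ball x r - {x}" for z
    using penalty_touches_above[of "cball 0 (R + T)", OF max_in_x] ball_in_working_ball[OF xy(1) assms(3)]
      that by (auto simp: \<phi>_def)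
  moreover have "u_touch r = (\<lambda>z. if z \<in> ball x r then \<phi> z else u z)"
    by (simp add: u_touch_def \<phi>_def fun_eq_iff)
  ultimately show ?thesis
    using assms(1,2) unfolding visc_ge0_def by presburger
qed

lemma inf_frac_lap_w_touch_nonpos:
  assumes "visc_le0 s w y" "0 < r" "r \<le> 1"
  shows "inf_frac_lap s (w_touch r) y \<le> 0"
proof -
  define \<psi> where "\<psi> z = w y - penalty \<epsilon> (x - y) (y - z)" for z
  have "continuous_on (cball y r) \<psi>"
    unfolding \<psi>_def penalty_def by (intro continuous_intros) (use \<epsilon> in auto)
  moreover have "\<psi> y = w y"
    by (simp add: \<psi>_def)
  moreover have "C11_at \<psi> y"
    using C11_with_penalty_below[OF \<epsilon>] by (auto simp: C11_at_def \<psi>_def[abs_def])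
  moreover have "\<psi> z < w z" if "z \<in> ball y r - {y}" for z
    using penalty_touches_below[of "cball 0 (R + T)", OF max_in_y] ball_in_working_ball[OF xy(2) assms(3)]
      that by (auto simp: \<psi>_def)
  moreover have "w_touch r = (\<lambda>z. if z \<in> ball y r then \<psi> z else w z)"
    by (simp add: w_touch_def \<psi>_def fun_eq_iff)
  ultimately show ?thesis
    using assms(1,2) unfolding visc_le0_def by presburger
qed

lemma grad_at_u_touch: "0 < r \<Longrightarrow> grad_at (u_touch r) x = (4 * norm (x - y)^2 / \<epsilon>) *\<^sub>R (x - y)"
  unfolding u_touch_def by (intro grad_at_eqI C11_with_patch C11_with_penalty_above \<epsilon>)

lemma grad_at_w_touch: "0 < r \<Longrightarrow> grad_at (w_touch r) y = (4 * norm (x - y)^2 / \<epsilon>) *\<^sub>R (x - y)"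
  unfolding w_touch_def by (intro grad_at_eqI C11_with_patch C11_with_penalty_below \<epsilon>)

lemma u_touch_near: "norm h < r \<Longrightarrow> u_touch r (x + h) = u x + penalty \<epsilon> (x - y) h"
  by (simp add: u_touch_def dist_norm)

lemma w_touch_near: "norm h < r \<Longrightarrow> w_touch r (y + h) = w y - penalty \<epsilon> (x - y) (- h)"
  by (simp add: w_touch_def dist_norm)

lemma u_touch_far: "r \<le> norm h \<Longrightarrow> u_touch r (x + h) = u (x + h)"
  by (simp add: u_touch_def dist_norm)

lemma w_touch_far: "r \<le> norm h \<Longrightarrow> w_touch r (y + h) = w (y + h)"
  by (simp add: w_touch_def dist_norm)

lemma touch_center: "0 < r \<Longrightarrow> u_touch r x = u x" "0 < r \<Longrightarrow> w_touch r y = w y"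
  by (simp_all add: u_touch_def w_touch_def)

lemma penalty_second_difference_curvature:
  assumes "norm h \<le> 1"
  shows "0 \<le> penalty \<epsilon> (x - y) h + penalty \<epsilon> (x - y) (- h)"
    and "penalty \<epsilon> (x - y) h + penalty \<epsilon> (x - y) (- h) \<le> curvature * norm h^2"
  using penalty_second_difference[OF \<epsilon> assms] by (simp_all add: curvature_def)

lemma penalty_flat_curvature:
  assumes "x = y" "norm h \<le> 1"
  shows "\<bar>penalty \<epsilon> (x - y) h\<bar> \<le> curvature * norm h^2"
proof -
  have "penalty \<epsilon> (x - y) (- h) = penalty \<epsilon> (x - y) h"
    using assms(1) by (simp add: penalty_def)
  then show ?thesis
    using penalty_second_difference_curvature[OF assms(2)] by simp
qed

lemma touch_gradient_eq_0_iff: "(4 * norm (x - y)^2 / \<epsilon>) *\<^sub>R (x - y) = 0 \<longleftrightarrow> x = y"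
  using \<epsilon> by simp

lemma touch_measurable: "u_touch r \<in> borel_measurable borel" "w_touch r \<in> borel_measurable borel"
  unfolding u_touch_def w_touch_def penalty_def using cont \<epsilon>
  by (intro measurable_If_set borel_measurable_continuous_onI continuous_intros; simp)+

lemma frac_lap_admissible_u_touch:
  assumes r: "0 < r" "r \<le> 1"
  shows "frac_lap_admissible \<alpha> r curvature (2 * C * ((1 + R) / r + 1) powr \<alpha>) (u_touch r) x"
  unfolding frac_lap_admissible_def
proof (intro conjI allI impI)
  fix h :: "real^'n"
  assume h: "norm h < r"
  then show "\<bar>u_touch r (x + h) + u_touch r (x - h) - 2 * u_touch r x\<bar> \<le> curvature * norm h^2"
    using u_touch_near[of h r] u_touch_near[of "- h" r] touch_center r
      penalty_second_difference_curvature[of h] by simp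
  assume "grad_at (u_touch r) x = 0"
  then have "x = y"
    using grad_at_u_touch[OF r(1)] touch_gradient_eq_0_iff by simp
  then show "\<bar>u_touch r (x + h) - u_touch r x\<bar> \<le> curvature * norm h^2"
    using u_touch_near[OF h] touch_center r h penalty_flat_curvature[of h] by simp
next
  fix h :: "real^'n"
  assume "r \<le> norm h"
  then show "\<bar>u_touch r (x + h) - u_touch r x\<bar> \<le> 2 * C * ((1 + R) / r + 1) powr \<alpha> * norm h powr \<alpha>"
    using increment_growth[OF growth(1) \<alpha>(1) _ _ r(1)] C norm_xy_less u_touch_far touch_center r
    by (simp add: less_imp_le)
qed (rule touch_measurable)

lemma frac_lap_admissible_w_touch:
  assumes r: "0 < r" "r \<le> 1"
  shows "frac_lap_admissible \<alpha> r curvature (2 * C * ((1 + R) / r + 1) powr \<alpha>) (w_touch r) y"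
  unfolding frac_lap_admissible_def
proof (intro conjI allI impI)
  fix h :: "real^'n"
  assume h: "norm h < r"
  then show "\<bar>w_touch r (y + h) + w_touch r (y - h) - 2 * w_touch r y\<bar> \<le> curvature * norm h^2"
    using w_touch_near[of h r] w_touch_near[of "- h" r] touch_center r
      penalty_second_difference_curvature[of h] by simp
  assume "grad_at (w_touch r) y = 0"
  then have "x = y"
    using grad_at_w_touch[OF r(1)] touch_gradient_eq_0_iff by simp
  then show "\<bar>w_touch r (y + h) - w_touch r y\<bar> \<le> curvature * norm h^2"
    using w_touch_near[OF h] touch_center r h penalty_flat_curvature[of "- h"] by simp
next
  fix h :: "real^'n"
  assume "r \<le> norm h"
  then show "\<bar>w_touch r (y + h) - w_touch r y\<bar> \<le> 2 * C * ((1 + R) / r + 1) powr \<alpha> * norm h powr \<alpha>"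
    using increment_growth[OF growth(2) \<alpha>(1) _ _ r(1)] C norm_xy_less w_touch_far touch_center r
    by (simp add: less_imp_le)
qed (rule touch_measurable)

definition increment_gap :: "real \<Rightarrow> real^'n \<Rightarrow> real" where
  "increment_gap r h = (u_touch r (x + h) - u_touch r x) - (w_touch r (y + h) - w_touch r y)"

lemma increment_gap_near:
  assumes "norm h < r" "r \<le> 1"
  shows "increment_gap r h \<le> curvature * norm h^2"
proof -
  have "0 < r"
    using assms(1) norm_ge_zero[of h] by linarith
  then show ?thesis
    using assms u_touch_near[of h r] w_touch_near[of h r] touch_center[of r]
      penalty_second_difference_curvature[of h]
    by (simp add: increment_gap_def)
qed

lemma increment_gap_far:
  assumes "0 < r" "r \<le> norm h"
  shows "increment_gap r h = (u (x + h) - w (y + h)) - (u x - w y)"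
  using assms u_touch_far w_touch_far touch_center by (simp add: increment_gap_def)

lemma shifts_in_working_ball:
  assumes "norm h \<le> T"
  shows "x + h \<in> cball 0 (R + T)" "y + h \<in> cball 0 (R + T)"
  using in_working_ball[OF _ assms] norm_xy_less by (simp_all add: less_imp_le)

lemma increment_gap_nonpos:
  assumes "0 < r" "r \<le> norm h" "norm h \<le> T"
  shows "increment_gap r h \<le> 0"
  using max[OF shifts_in_working_ball[OF assms(3)]] assms by (simp add: increment_gap_far)

lemma increment_gap_exit:
  assumes "0 < r" "r \<le> norm h" "norm h \<le> T" "exit_radius \<le> norm h"
  shows "increment_gap r h \<le> - M / 2"
proof -
  have "u (x + h) \<le> w (x + h)"
    using outside outside_of_exit_radius[OF xy(1) assms(4)] by blast
  moreover have "\<bar>w (x + h) - w (y + h)\<bar> < M / 2"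
    using osc[OF shifts_in_working_ball[OF assms(3)]] by simp
  then have "w (x + h) - w (y + h) < M / 2"
    by (meson abs_less_iff)
  ultimately show ?thesis
    using gap increment_gap_far[OF assms(1,2)] by linarith
qed

lemma increment_gap_tail:
  assumes "0 < r" "r \<le> norm h" "T \<le> norm h"
  shows "increment_gap r h \<le> tail_coeff * norm h powr \<alpha>"
proof -
  have "1 + R \<le> norm h"
    using assms T by linarith
  then have "\<bar>u (x + h) - u x\<bar> \<le> 2 * C * 2 powr \<alpha> * norm h powr \<alpha>"
    "\<bar>w (y + h) - w y\<bar> \<le> 2 * C * 2 powr \<alpha> * norm h powr \<alpha>"
    using increment_growth[OF growth(1) \<alpha>(1), of x R "1 + R" h]
      increment_growth[OF growth(2) \<alpha>(1), of y R "1 + R" h] C R norm_xy_less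
    by (simp_all add: less_imp_le)
  then show ?thesis
    using assms increment_gap_far by (simp add: tail_coeff_def abs_le_iff)
qed

text \<open>A majorant of \<open>increment_gap r (t e) / t\<^sup>1\<^sup>+\<^sup>2\<^sup>s\<close>, uniform in the direction \<open>e\<close>.\<close>

definition barrier :: "real \<Rightarrow> real \<Rightarrow> real" where
  "barrier r t = (if t \<in> {0<..<r} then curvature * t powr (1 - 2 * s) else 0)
     + (if t \<in> {exit_radius..2 * exit_radius} then - annulus_gain M else 0)
     + (if t \<in> {T..} then tail_coeff * t powr (\<alpha> - 1 - 2 * s) else 0)"

lemma increment_gap_le_barrier:
  assumes r: "0 < r" "r \<le> 1" and e: "norm e = 1" and t: "0 < t"
  shows "increment_gap r (t *\<^sub>R e) / t powr (1 + 2 * s) \<le> barrier r t"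
proof -
  have h: "norm (t *\<^sub>R e) = t"
    using e t by simp
  have k: "0 < t powr (1 + 2 * s)"
    using t by simp
  have radii: "r < exit_radius" "2 * exit_radius < T"
    using r R T by (auto simp: exit_radius_def)
  consider "t < r" | "r \<le> t" "t < T" "\<not> (exit_radius \<le> t \<and> t \<le> 2 * exit_radius)"
    | "exit_radius \<le> t" "t \<le> 2 * exit_radius" | "T \<le> t"
    using radii by linarith
  then show ?thesis
  proof cases
    case 1
    then have "increment_gap r (t *\<^sub>R e) / t powr (1 + 2 * s) \<le> curvature * t powr 2 / t powr (1 + 2 * s)"
      using increment_gap_near[of "t *\<^sub>R e" r] h r k t by (simp add: divide_right_mono powr_numeral)
    also have "\<dots> = curvature * t powr (1 - 2 * s)"
      using powr_div_kernel[of t curvature 2 s] t by simp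
    finally show ?thesis
      using 1 radii t by (simp add: barrier_def)
  next
    case 2
    then show ?thesis
      using increment_gap_nonpos[of r "t *\<^sub>R e"] h r k by (auto simp: barrier_def divide_nonpos_pos)
  next
    case 3
    then have "increment_gap r (t *\<^sub>R e) \<le> - (M / 2)"
      using increment_gap_exit[of r "t *\<^sub>R e"] h r radii by simp
    then have "increment_gap r (t *\<^sub>R e) / t powr (1 + 2 * s) \<le> - (M / 2) / t powr (1 + 2 * s)"
      using k by (intro divide_right_mono) auto
    also have "\<dots> \<le> - annulus_gain M"
      using annulus_gain_le[OF M t] 3 by simp
    finally show ?thesis
      using 3 radii r by (simp add: barrier_def)
  next
    case 4
    then have "increment_gap r (t *\<^sub>R e) / t powr (1 + 2 * s) \<le> tail_coeff * t powr \<alpha> / t powr (1 + 2 * s)"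
      using increment_gap_tail[of r "t *\<^sub>R e"] h r k radii by (simp add: divide_right_mono)
    also have "\<dots> = tail_coeff * t powr (\<alpha> - 1 - 2 * s)"
      using powr_div_kernel[of t tail_coeff \<alpha> s] t by simp
    finally show ?thesis
      using 4 radii r by (simp add: barrier_def)
  qed
qed

lemma has_integral_barrier:
  assumes "0 < r"
  shows "(barrier r has_integral curvature * (r powr (2 - 2 * s) / (2 - 2 * s)) - annulus_gain M * exit_radius
      + tail_coeff * (T powr (\<alpha> - 2 * s) / (2 * s - \<alpha>))) {0<..}"
proof -
  have "((\<lambda>t. - annulus_gain M) has_integral - annulus_gain M * exit_radius) {exit_radius..2 * exit_radius}"
    using has_integral_const_real[of "- annulus_gain M" exit_radius "2 * exit_radius"] exit_radius_ge_1
    by (simp add: mult.commute)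
  then show ?thesis
    unfolding barrier_def diff_conv_add_uminus[of _ "annulus_gain M * exit_radius"]
    using assms exit_radius_ge_1 T s \<alpha>
    by (intro has_integral_add has_integral_restrict[THEN iffD2] has_integral_powr_near_0
        has_integral_powr_tail) auto
qed

lemma inf_frac_lap_touch_le:
  assumes r: "0 < r" "r \<le> 1"
  shows "inf_frac_lap s (u_touch r) x \<le> inf_frac_lap s (w_touch r) y
    + 2 * (curvature * (r powr (2 - 2 * s) / (2 - 2 * s)) - annulus_gain M * exit_radius
      + tail_coeff * (T powr (\<alpha> - 2 * s) / (2 * s - \<alpha>)))"
proof -
  have "0 \<le> curvature" "0 \<le> 2 * C * ((1 + R) / r + 1) powr \<alpha>"
    using \<epsilon> C by (simp_all add: curvature_def)
  then show ?thesis
    using inf_frac_lap_le_of_increment_bound[OF frac_lap_admissible_u_touch[OF r] frac_lap_admissible_w_touch[OF r]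
        s \<alpha> r(1), of "barrier r"] grad_at_u_touch grad_at_w_touch increment_gap_le_barrier[OF r]
      has_integral_barrier[OF r(1)] r
    by (simp add: increment_gap_def integral_unique has_integral_integrable)
qed

lemma no_doubled_point:
  assumes "visc_ge0 s u x" "visc_le0 s w y"
  shows False
proof -
  define \<eta> where "\<eta> = annulus_gain M * exit_radius / 2"
  have \<eta>: "0 < \<eta>"
    using M exit_radius_ge_1 by (simp add: \<eta>_def annulus_gain_def)
  have "((\<lambda>r. curvature * (r powr (2 - 2 * s) / (2 - 2 * s))) \<longlongrightarrow> curvature * (0 / (2 - 2 * s))) (at_right 0)"
    using s by (intro tendsto_intros tendsto_zero_powrI[OF tendsto_ident_at]) (auto simp: eventually_at_filter)
  then have "\<forall>\<^sub>F r in at_right 0. curvature * (r powr (2 - 2 * s) / (2 - 2 * s)) < \<eta>"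
    using \<eta> by (intro order_tendstoD(2)) auto
  moreover have "\<forall>\<^sub>F r in at_right (0::real). r < 1"
    by (intro order_tendstoD(2)[OF tendsto_ident_at]) simp
  ultimately have "\<forall>\<^sub>F r in at_right 0. 0 < r \<and> r < 1 \<and> curvature * (r powr (2 - 2 * s) / (2 - 2 * s)) < \<eta>"
    using eventually_at_right_less by (intro eventually_conj) auto
  then obtain r where r: "0 < r" "r < 1" "curvature * (r powr (2 - 2 * s) / (2 - 2 * s)) < \<eta>"
    using eventually_happens'[OF trivial_limit_at_right_real] by blast
  have "curvature * (r powr (2 - 2 * s) / (2 - 2 * s)) - annulus_gain M * exit_radius
      + tail_coeff * (T powr (\<alpha> - 2 * s) / (2 * s - \<alpha>)) < 0"
    using r(3) tail unfolding \<eta>_def by linarith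
  then show False
    using inf_frac_lap_touch_le[OF r(1) less_imp_le[OF r(2)]]
      inf_frac_lap_u_touch_nonneg[OF assms(1) r(1) less_imp_le[OF r(2)]]
      inf_frac_lap_w_touch_nonpos[OF assms(2) r(1) less_imp_le[OF r(2)]]
    by (smt (verit))
qed

end

context growth_comparison
begin

lemma exists_doubled_point:
  assumes "x0 \<in> \<Omega>" "w x0 < u x0"
  obtains M T \<epsilon> x y where "doubled_point s \<Omega> u w \<alpha> C R M T \<epsilon> x y"
proof -
  define M where "M = u x0 - w x0"
  have M: "0 < M"
    using assms by (simp add: M_def)
  have "((\<lambda>T. tail_coeff * (T powr (\<alpha> - 2 * s) / (2 * s - \<alpha>))) \<longlongrightarrow> tail_coeff * (0 / (2 * s - \<alpha>))) at_top"
    using \<alpha> by (intro tendsto_intros tendsto_neg_powr filterlim_ident) auto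
  moreover have "0 < annulus_gain M * exit_radius / 2"
    using M exit_radius_ge_1 by (simp add: annulus_gain_def)
  ultimately have "\<forall>\<^sub>F T in at_top. tail_coeff * (T powr (\<alpha> - 2 * s) / (2 * s - \<alpha>)) < annulus_gain M * exit_radius / 2"
    by (intro order_tendstoD(2)) auto
  moreover have "\<forall>\<^sub>F T in at_top. 2 * exit_radius + 1 + R \<le> T"
    by (rule eventually_ge_at_top)
  ultimately have "\<forall>\<^sub>F T in at_top. tail_coeff * (T powr (\<alpha> - 2 * s) / (2 * s - \<alpha>)) < annulus_gain M * exit_radius / 2
      \<and> 2 * exit_radius + 1 + R \<le> T"
    by (rule eventually_conj)
  then obtain T where T: "tail_coeff * (T powr (\<alpha> - 2 * s) / (2 * s - \<alpha>)) < annulus_gain M * exit_radius / 2"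
    "2 * exit_radius + 1 + R \<le> T"
    using eventually_happens'[OF trivial_limit_at_top_linorder] by blast
  have \<Omega>T: "\<Omega> \<subseteq> cball 0 (R + T)"
    using \<Omega> T R exit_radius_ge_1 by auto
  obtain \<epsilon> x y where \<epsilon>: "0 < \<epsilon>" and xy: "x \<in> \<Omega>" "y \<in> \<Omega>"
    and max: "\<And>p q. p \<in> cball 0 (R + T) \<Longrightarrow> q \<in> cball 0 (R + T) \<Longrightarrow>
      u p - w q - norm (p - q)^4 / \<epsilon> \<le> u x - w y - norm (x - y)^4 / \<epsilon>"
    and osc: "\<And>p q. p \<in> cball 0 (R + T) \<Longrightarrow> q \<in> cball 0 (R + T) \<Longrightarrow> p - q = x - y \<Longrightarrow>
      \<bar>w p - w q\<bar> < (u x0 - w x0) / 2"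
    using penalized_maximum[OF cont compact_cball \<Omega>T outside assms] by blast
  have "0 \<le> norm (x - y)^4 / \<epsilon>"
    using \<epsilon> by simp
  then have "M \<le> u x - w y"
    using max[of x0 x0] \<Omega>T assms(1) by (auto simp: M_def)
  then have "doubled_point s \<Omega> u w \<alpha> C R M T \<epsilon> x y"
    using M T \<epsilon> xy max osc R exit_radius_ge_1
    by (intro doubled_point.intro doubled_point_axioms.intro growth_comparison_axioms) (auto simp: M_def)
  then show ?thesis
    by (rule that)
qed

theorem comparison:
  assumes "\<And>z. z \<in> \<Omega> \<Longrightarrow> visc_ge0 s u z" "\<And>z. z \<in> \<Omega> \<Longrightarrow> visc_le0 s w z" "z \<in> \<Omega>"
  shows "u z \<le> w z"
proof (rule ccontr)
  assume "\<not> u z \<le> w z"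
  then obtain M T \<epsilon> x y where "doubled_point s \<Omega> u w \<alpha> C R M T \<epsilon> x y"
    using exists_doubled_point[OF assms(3)] by force
  then interpret doubled_point s \<Omega> u w \<alpha> C R M T \<epsilon> x y .
  show False
    using no_doubled_point assms(1,2) xy by blast
qed

end

theorem theorem3p2:
  fixes s :: real and \<Omega> :: "(real^'n) set" and u w :: "real^'n \<Rightarrow> real"
  assumes "1/2 < s" and "s < 1"
    and "open \<Omega>" and "bounded \<Omega>"
    and "continuous_on UNIV u" and "continuous_on UNIV w"
    and "\<forall>x\<in>\<Omega>. visc_ge0 s u x" and "\<forall>x\<in>\<Omega>. visc_le0 s w x"
    and "\<exists>\<alpha> C. \<alpha> < 2 * s \<and> C > 0 \<and>
           (\<forall>x. \<bar>u x\<bar> \<le> C * (1 + norm x) powr \<alpha> \<and> \<bar>w x\<bar> \<le> C * (1 + norm x) powr \<alpha>)"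
    and "\<forall>x. x \<notin> \<Omega> \<longrightarrow> u x \<le> w x"
  shows "\<forall>x\<in>\<Omega>. u x \<le> w x"
proof -
  obtain \<alpha> C where \<alpha>: "\<alpha> < 2 * s" and C: "0 < C"
    and growth: "\<And>q. \<bar>u q\<bar> \<le> C * (1 + norm q) powr \<alpha> \<and> \<bar>w q\<bar> \<le> C * (1 + norm q) powr \<alpha>"
    using assms(9) by blast
  have "(1 + norm q) powr \<alpha> \<le> (1 + norm q) powr max \<alpha> 0" for q :: "real^'n"
    by (intro powr_mono) auto
  then have "\<bar>u q\<bar> \<le> C * (1 + norm q) powr max \<alpha> 0" "\<bar>w q\<bar> \<le> C * (1 + norm q) powr max \<alpha> 0" for q
    using growth[of q] C by (meson mult_left_mono less_imp_le order_trans)+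
  moreover obtain R where "0 < R" "\<Omega> \<subseteq> ball 0 R"
    using bounded_subset_ballD[OF assms(4)] by blast
  ultimately interpret growth_comparison s \<Omega> u w "max \<alpha> 0" C R
    using assms(1,2,5,6,10) \<alpha> C by unfold_locales auto
  show ?thesis
    using comparison assms(7,8) by blast
qed

end
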